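(* Let $\mathcal{A}\in\mathbb{R}^{d_1\times\cdots\times d_k}$ be an order-$k$ real tensor. (a) If $\pi_1,\pi_2\in\mathcal{P}_{[k]}$ with $\pi_1\le\pi_2$ and $\mathcal{A}$ is $\pi_1$-OD, then $\mathcal{A}$ is $\pi_2$-OD. (b) If $\pi\in\mathcal{P}_{[k]}$, $\pi\ne\mathbf{1}_{[k]}$, and $\mathcal{A}$ is $\pi$-OD with a decomposition $\mathcal{A}=\sum_{n=1}^r\lambda_n\mathbf{a}^{(n)}_1\otimes\cdots\otimes\mathbf{a}^{(n)}_k$ as in the definition of $\pi$-OD, then $\|\mathrm{Unfold}_\pi(\mathcal{A})\|_\sigma=\lambda_1$.
   Context: $\mathcal{P}_{[k]}$ is the set of partitions of $[k]$, ordered by refinement: $\pi_1\le\pi_2$ if every block of $\pi_1$ is contained in a block of $\pi_2$; $\mathbf{1}_{[k]}=\{[k]\}$. $\mathcal{A}$ is called $\pi$-orthogonal decomposable ($\pi$-OD) if $\mathcal{A}=\sum_{n=1}^r\lambda_n\mathbf{a}^{(n)}_1\otimes\cdots\otimes\mathbf{a}^{(n)}_k$ with $\lambda_1\ge\lambda_2\ge\cdots\ge\lambda_r\ge0$ and vectors $\mathbf{a}^{(n)}_i\in\mathbb{R}^{d_i}$ satisfying $\langle\otimes_{i\in B}\mathbf{a}^{(n)}_i,\otimes_{i\in B}\mathbf{a}^{(m)}_i\rangle=\delta_{nm}$ for all $B\in\pi$ and all $n,m\in[r]$ (inner product = sum of entrywise products). For a real tensor $\mathcal{T}\in\mathbb{R}^{e_1\times\cdots\times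 e_m}$, $\|\mathcal{T}\|_\sigma=\sup\{\sum t_{i_1\dots i_m}x^{(1)}_{i_1}\cdots x^{(m)}_{i_m}:\ \|\mathbf{x}_n\|_2=1\}$. Unfolding: for $\pi=\{B_1,\dots,B_\ell\}$, $\mathrm{Unfold}_\pi(\mathcal{A})$ is the order-$\ell$ tensor of dimensions $(\prod_{j\in B_1}d_j,\dots,\prod_{j\in B_\ell}d_j)$ whose entry at $(m_1,\dots,m_\ell)$ is $a_{i_1\dots i_k}$, where $m_j$ corresponds to $(i_r)_{r\in B_j}$ under a fixed bijection $\prod_{r\in B_j}[d_r]\to[\prod_{r\in B_j}d_r]$. *)

theory Defs
  imports "HOL-Analysis.Analysis" "HOL-Library.Disjoint_Sets" "HOL-Library.FuncSet"
begin

text \<open>The index set [k] is rendered as {..<k} (0-based). A real tensor of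
order m with dimensions e 0, ..., e (m-1) is a function from index tuples to reals; only
its values on tidx m e (extensional functions i with i j < e j for j < m) matter.
A vector v in R^(d j) is a function nat => real, of which only entries 0..<d j matter.\<close>

definition tidx :: "nat \<Rightarrow> (nat \<Rightarrow> nat) \<Rightarrow> (nat \<Rightarrow> nat) set" where
  "tidx m e = PiE {..<m} (\<lambda>j. {..<e j})"

definition bidx :: "(nat \<Rightarrow> nat) \<Rightarrow> nat set \<Rightarrow> (nat \<Rightarrow> nat) set" where
  "bidx d B = PiE B (\<lambda>j. {..<d j})"

definition tprod :: "(nat \<Rightarrow> nat \<Rightarrow> real) \<Rightarrow> nat set \<Rightarrow> (nat \<Rightarrow> nat) \<Rightarrow> real" where
  "tprod v B = (\<lambda>i. \<Prod>j\<in>B. v j (i j))"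

definition tinner :: "(nat \<Rightarrow> nat) \<Rightarrow> nat set \<Rightarrow> ((nat \<Rightarrow> nat) \<Rightarrow> real)
    \<Rightarrow> ((nat \<Rightarrow> nat) \<Rightarrow> real) \<Rightarrow> real" where
  "tinner d B f g = (\<Sum>i\<in>bidx d B. f i * g i)"

definition refines :: "nat set set \<Rightarrow> nat set set \<Rightarrow> bool" where
  "refines \<pi>1 \<pi>2 \<longleftrightarrow> (\<forall>B1\<in>\<pi>1. \<exists>B2\<in>\<pi>2. B1 \<subseteq> B2)"

text \<open>A decomposition A = sum_{n<r} lam n * a n 0 (x) ... (x) a n (k-1) as in the
definition of pi-OD (lam 0 corresponds to lambda_1).\<close>
definition is_piOD_decomp :: "nat \<Rightarrow> (nat \<Rightarrow> nat) \<Rightarrow> nat set set \<Rightarrow> ((nat \<Rightarrow> nat) \<Rightarrow> real)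
    \<Rightarrow> nat \<Rightarrow> (nat \<Rightarrow> real) \<Rightarrow> (nat \<Rightarrow> nat \<Rightarrow> nat \<Rightarrow> real) \<Rightarrow> bool" where
  "is_piOD_decomp k d \<pi> A r lam a \<longleftrightarrow>
     (\<forall>n m. n \<le> m \<longrightarrow> m < r \<longrightarrow> lam m \<le> lam n) \<and>
     (\<forall>n<r. 0 \<le> lam n) \<and>
     (\<forall>i\<in>tidx k d. A i = (\<Sum>n<r. lam n * (\<Prod>j<k. a n j (i j)))) \<and>
     (\<forall>B\<in>\<pi>. \<forall>n<r. \<forall>m<r.
        tinner d B (tprod (a n) B) (tprod (a m) B) = (if n = m then 1 else 0))"

definition piOD :: "nat \<Rightarrow> (nat \<Rightarrow> nat) \<Rightarrow> nat set set \<Rightarrow> ((nat \<Rightarrow> nat) \<Rightarrow> real) \<Rightarrow> bool" where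
  "piOD k d \<pi> A \<longleftrightarrow> (\<exists>r lam a. is_piOD_decomp k d \<pi> A r lam a)"

definition spectral_norm :: "nat \<Rightarrow> (nat \<Rightarrow> nat) \<Rightarrow> ((nat \<Rightarrow> nat) \<Rightarrow> real) \<Rightarrow> real" where
  "spectral_norm m e T = Sup {(\<Sum>i\<in>tidx m e. T i * (\<Prod>j<m. x j (i j))) | x.
       \<forall>j<m. (\<Sum>t<e j. (x j t)\<^sup>2) = 1}"

text \<open>Unfolding: a fixed enumeration B_0, ..., B_(l-1) of the blocks and, for each block,
a fixed bijection from its index tuples onto {..< prod d B}.\<close>
definition blocks :: "nat set set \<Rightarrow> nat set list" where
  "blocks \<pi> = (SOME bs. distinct bs \<and> set bs = \<pi>)"

definition benc :: "(nat \<Rightarrow> nat) \<Rightarrow> nat set \<Rightarrow> (nat \<Rightarrow> nat) \<Rightarrow> nat" where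
  "benc d B = (SOME f. bij_betw f (bidx d B) {..<(\<Prod>j\<in>B. d j)})"

definition unfold_dims :: "(nat \<Rightarrow> nat) \<Rightarrow> nat set set \<Rightarrow> nat \<Rightarrow> nat" where
  "unfold_dims d \<pi> j = (\<Prod>r\<in>blocks \<pi> ! j. d r)"

definition Unfold :: "nat \<Rightarrow> (nat \<Rightarrow> nat) \<Rightarrow> nat set set \<Rightarrow> ((nat \<Rightarrow> nat) \<Rightarrow> real)
    \<Rightarrow> (nat \<Rightarrow> nat) \<Rightarrow> real" where
  "Unfold k d \<pi> A = (\<lambda>m. A (\<lambda>r. if r < k then
      (let bs = blocks \<pi>; j = (THE j. j < length bs \<and> r \<in> bs ! j)
       in inv_into (bidx d (bs ! j)) (benc d (bs ! j)) (m j) r)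
    else undefined))"

end

theory Submission
  imports Defs
begin

text \<open>(a) The inner product of pure tensors over a union of disjoint blocks is the product of
the inner products over the blocks, so orthonormality over the blocks of \<open>\<pi>\<^sub>1\<close> gives
orthonormality over every union of them, in particular over the blocks of \<open>\<pi>\<^sub>2\<close>.

(b) Unfolding along \<open>\<pi>\<close> turns the decomposition into \<open>\<Sum>\<^sub>n \<lambda>\<^sub>n u\<^sub>n\<^sub>1 \<otimes> \<dots> \<otimes> u\<^sub>n\<^sub>l\<close> with
orthonormal families \<open>(u\<^sub>n\<^sub>j)\<^sub>n\<close> for each \<open>j\<close> and \<open>l = |\<pi>| \<ge> 2\<close>. For unit vectors \<open>x\<^sub>j\<close> put
\<open>c\<^sub>n\<^sub>j = \<langle>u\<^sub>n\<^sub>j, x\<^sub>j\<rangle>\<close>; Bessel's inequality gives \<open>\<Sum>\<^sub>n c\<^sub>n\<^sub>j\<^sup>2 \<le> 1\<close>, hence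
\<open>\<Prod>\<^sub>j c\<^sub>n\<^sub>j \<le> (c\<^sub>n\<^sub>1\<^sup>2 + c\<^sub>n\<^sub>2\<^sup>2)/2\<close>, and the multilinear form is at most
\<open>\<lambda>\<^sub>1 \<Sum>\<^sub>n (c\<^sub>n\<^sub>1\<^sup>2 + c\<^sub>n\<^sub>2\<^sup>2)/2 \<le> \<lambda>\<^sub>1\<close>. The choice \<open>x\<^sub>j = u\<^sub>1\<^sub>j\<close> attains \<open>\<lambda>\<^sub>1\<close>.\<close>

lemma tinner_tprod:
  assumes "finite B"
  shows "tinner d B (tprod u B) (tprod w B) = (\<Prod>j\<in>B. \<Sum>t<d j. u j t * w j t)"
proof -
  have "tinner d B (tprod u B) (tprod w B) = (\<Sum>i\<in>bidx d B. \<Prod>j\<in>B. u j (i j) * w j (i j))"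
    unfolding tinner_def tprod_def by (simp add: prod.distrib)
  also have "\<dots> = (\<Prod>j\<in>B. \<Sum>t<d j. u j t * w j t)"
    unfolding bidx_def using assms by (simp add: prod_sum_PiE)
  finally show ?thesis .
qed

lemma Union_refining_blocks:
  assumes p1: "partition_on S \<pi>1" and p2: "partition_on S \<pi>2"
    and ref: "refines \<pi>1 \<pi>2" and B: "B \<in> \<pi>2"
  shows "\<Union>{C\<in>\<pi>1. C \<subseteq> B} = B"
proof
  show "B \<subseteq> \<Union>{C\<in>\<pi>1. C \<subseteq> B}"
  proof
    fix x assume x: "x \<in> B"
    then obtain C where C: "C \<in> \<pi>1" "x \<in> C"
      using p1 p2 B partition_onD1 by blast
    then obtain B' where B': "B' \<in> \<pi>2" "C \<subseteq> B'"
      using ref unfolding refines_def by blast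
    have "B' = B"
      using partition_onD2[OF p2] B' B x C unfolding pairwise_def disjnt_def by blast
    then show "x \<in> \<Union>{C\<in>\<pi>1. C \<subseteq> B}" using C B' by blast
  qed
qed blast

lemma is_piOD_decomp_refines:
  assumes p1: "partition_on {..<k} \<pi>1" and p2: "partition_on {..<k} \<pi>2"
    and ref: "refines \<pi>1 \<pi>2" and D: "is_piOD_decomp k d \<pi>1 A r lam a"
  shows "is_piOD_decomp k d \<pi>2 A r lam a"
proof -
  have "tinner d B (tprod (a n) B) (tprod (a m) B) = (if n = m then 1 else 0)"
    if B: "B \<in> \<pi>2" and n: "n < r" and m: "m < r" for B n m
  proof -
    define \<C> where "\<C> = {C\<in>\<pi>1. C \<subseteq> B}"
    have U: "\<Union>\<C> = B"
      unfolding \<C>_def by (rule Union_refining_blocks[OF p1 p2 ref B])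
    have finB: "finite B"
      using p2 B partition_onD1 finite_subset[of B "{..<k}"] by blast
    have fin\<C>: "finite \<C>" "\<forall>C\<in>\<C>. finite C"
      using finite_elements[OF _ p1] finB finite_subset unfolding \<C>_def by auto
    have "\<C> \<noteq> {}" using U B partition_onD3[OF p2] by auto
    have disj: "\<forall>C\<in>\<C>. \<forall>C'\<in>\<C>. C \<noteq> C' \<longrightarrow> C \<inter> C' = {}"
      using partition_onD2[OF p1] unfolding \<C>_def pairwise_def disjnt_def by blast
    have "tinner d B (tprod (a n) B) (tprod (a m) B) = (\<Prod>j\<in>\<Union>\<C>. \<Sum>t<d j. a n j t * a m j t)"
      using tinner_tprod[OF finB] U by simp
    also have "\<dots> = (\<Prod>C\<in>\<C>. \<Prod>j\<in>C. \<Sum>t<d j. a n j t * a m j t)"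
      using prod.Union_disjoint[OF fin\<C>(2) disj] by simp
    also have "\<dots> = (\<Prod>C\<in>\<C>. if n = m then 1 else 0)"
    proof (rule prod.cong[OF refl])
      fix C assume C: "C \<in> \<C>"
      then have "C \<in> \<pi>1" "finite C" using fin\<C> unfolding \<C>_def by auto
      then show "(\<Prod>j\<in>C. \<Sum>t<d j. a n j t * a m j t) = (if n = m then 1 else 0)"
        using D n m tinner_tprod[of C d "a n" "a m"] unfolding is_piOD_decomp_def by auto
    qed
    also have "\<dots> = (if n = m then 1 else 0)"
      using \<open>\<C> \<noteq> {}\<close> fin\<C>(1) by auto
    finally show ?thesis .
  qed
  then show ?thesis using D unfolding is_piOD_decomp_def by blast
qed

lemma piOD_refines:
  assumes "partition_on {..<k} \<pi>1" "partition_on {..<k} \<pi>2" "refines \<pi>1 \<pi>2"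
    and "piOD k d \<pi>1 A"
  shows "piOD k d \<pi>2 A"
  using assms is_piOD_decomp_refines unfolding piOD_def by blast

lemma bessel_inequality:
  fixes u :: "nat \<Rightarrow> nat \<Rightarrow> real" and x :: "nat \<Rightarrow> real"
  assumes orth: "\<And>n m. n < r \<Longrightarrow> m < r \<Longrightarrow> (\<Sum>t<N. u n t * u m t) = (if n = m then 1 else 0)"
  shows "(\<Sum>n<r. (\<Sum>t<N. u n t * x t)\<^sup>2) \<le> (\<Sum>t<N. (x t)\<^sup>2)"
proof -
  define c where "c n = (\<Sum>t<N. u n t * x t)" for n
  define s where "s t = (\<Sum>n<r. c n * u n t)" for t
  have mixed: "(\<Sum>t<N. x t * s t) = (\<Sum>n<r. c n * c n)"
  proof -
    have "(\<Sum>t<N. x t * s t) = (\<Sum>t<N. \<Sum>n<r. c n * (u n t * x t))"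
      unfolding s_def by (simp add: sum_distrib_left algebra_simps)
    also have "\<dots> = (\<Sum>n<r. c n * c n)"
      unfolding c_def by (subst sum.swap) (simp add: sum_distrib_left)
    finally show ?thesis .
  qed
  have square: "(\<Sum>t<N. s t * s t) = (\<Sum>n<r. c n * c n)"
  proof -
    have "(\<Sum>t<N. s t * s t) = (\<Sum>t<N. \<Sum>n<r. \<Sum>m<r. c n * c m * (u n t * u m t))"
      unfolding s_def by (simp add: sum_product algebra_simps)
    also have "\<dots> = (\<Sum>n<r. \<Sum>m<r. \<Sum>t<N. c n * c m * (u n t * u m t))"
      by (subst sum.swap, rule sum.cong[OF refl], rule sum.swap)
    also have "\<dots> = (\<Sum>n<r. \<Sum>m<r. c n * c m * (\<Sum>t<N. u n t * u m t))"
      by (simp add: sum_distrib_left)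
    also have "\<dots> = (\<Sum>n<r. \<Sum>m<r. if n = m then c n * c n else 0)"
      by (intro sum.cong refl) (simp add: orth)
    also have "\<dots> = (\<Sum>n<r. c n * c n)"
      by (simp add: sum.delta)
    finally show ?thesis .
  qed
  have "0 \<le> (\<Sum>t<N. (x t - s t)\<^sup>2)" by (simp add: sum_nonneg)
  also have "\<dots> = (\<Sum>t<N. (x t)\<^sup>2) - 2 * (\<Sum>t<N. x t * s t) + (\<Sum>t<N. s t * s t)"
    by (simp add: power2_eq_square algebra_simps sum.distrib sum_subtractf sum_distrib_left)
  finally show ?thesis
    using mixed square unfolding c_def by (simp add: power2_eq_square)
qed

lemma prod_le_half_sum_squares:
  fixes c :: "nat \<Rightarrow> real"
  assumes "2 \<le> l" and "\<And>j. j < l \<Longrightarrow> \<bar>c j\<bar> \<le> 1"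
  shows "(\<Prod>j<l. c j) \<le> ((c 0)\<^sup>2 + (c 1)\<^sup>2) / 2"
proof -
  have "{..<l} = insert 0 (insert 1 {2..<l})" using assms(1) by auto
  then have "(\<Prod>j<l. c j) \<le> \<bar>c 0\<bar> * (\<bar>c 1\<bar> * (\<Prod>j\<in>{2..<l}. \<bar>c j\<bar>))"
    using abs_ge_self[of "\<Prod>j<l. c j"] by (simp add: abs_prod abs_mult)
  also have "\<dots> \<le> \<bar>c 0\<bar> * (\<bar>c 1\<bar> * 1)"
  proof -
    have "(\<Prod>j\<in>{2..<l}. \<bar>c j\<bar>) \<le> 1"
      using assms(2) by (intro prod_le_1) auto
    then show ?thesis by (intro mult_left_mono) simp_all
  qed
  also have "\<dots> \<le> ((c 0)\<^sup>2 + (c 1)\<^sup>2) / 2"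
    using sum_squares_bound[of "\<bar>c 0\<bar>" "\<bar>c 1\<bar>"] by simp
  finally show ?thesis .
qed

definition rank_one_sum :: "nat \<Rightarrow> nat \<Rightarrow> (nat \<Rightarrow> real) \<Rightarrow> (nat \<Rightarrow> nat \<Rightarrow> nat \<Rightarrow> real)
    \<Rightarrow> (nat \<Rightarrow> nat) \<Rightarrow> real" where
  "rank_one_sum l r lam U = (\<lambda>i. \<Sum>n<r. lam n * (\<Prod>j<l. U n j (i j)))"

lemma spectral_norm_cong:
  assumes "\<And>i. i \<in> tidx m e \<Longrightarrow> T i = T' i"
  shows "spectral_norm m e T = spectral_norm m e T'"
proof -
  have "(\<Sum>i\<in>tidx m e. T i * (\<Prod>j<m. x j (i j))) = (\<Sum>i\<in>tidx m e. T' i * (\<Prod>j<m. x j (i j)))"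
    for x using assms by simp
  then show ?thesis unfolding spectral_norm_def by simp
qed

lemma multilinear_form_rank_one_sum:
  "(\<Sum>i\<in>tidx l e. rank_one_sum l r lam U i * (\<Prod>j<l. x j (i j)))
     = (\<Sum>n<r. lam n * (\<Prod>j<l. \<Sum>t<e j. U n j t * x j t))"
proof -
  have "(\<Sum>i\<in>tidx l e. rank_one_sum l r lam U i * (\<Prod>j<l. x j (i j)))
      = (\<Sum>i\<in>tidx l e. \<Sum>n<r. lam n * (\<Prod>j<l. U n j (i j) * x j (i j)))"
    unfolding rank_one_sum_def by (simp add: sum_distrib_right prod.distrib mult.assoc)
  also have "\<dots> = (\<Sum>n<r. lam n * (\<Sum>i\<in>tidx l e. \<Prod>j<l. U n j (i j) * x j (i j)))"
    by (subst sum.swap) (simp add: sum_distrib_left)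
  also have "\<dots> = (\<Sum>n<r. lam n * (\<Prod>j<l. \<Sum>t<e j. U n j t * x j t))"
    unfolding tidx_def by (simp add: prod_sum_PiE)
  finally show ?thesis .
qed

context
  fixes l r :: nat and e :: "nat \<Rightarrow> nat" and lam :: "nat \<Rightarrow> real"
    and U :: "nat \<Rightarrow> nat \<Rightarrow> nat \<Rightarrow> real"
  assumes order: "2 \<le> l" and rank: "0 < r"
    and lam_le_lam0: "\<And>n. n < r \<Longrightarrow> lam n \<le> lam 0"
    and lam_nonneg: "\<And>n. n < r \<Longrightarrow> 0 \<le> lam n"
    and orthonormal: "\<And>j n m. j < l \<Longrightarrow> n < r \<Longrightarrow> m < r \<Longrightarrow>
        (\<Sum>t<e j. U n j t * U m j t) = (if n = m then 1 else 0)"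
begin

lemma odeco_form_le:
  assumes unit: "\<And>j. j < l \<Longrightarrow> (\<Sum>t<e j. (x j t)\<^sup>2) = 1"
  shows "(\<Sum>n<r. lam n * (\<Prod>j<l. \<Sum>t<e j. U n j t * x j t)) \<le> lam 0"
proof -
  define c where "c n j = (\<Sum>t<e j. U n j t * x j t)" for n j
  have bessel: "(\<Sum>n<r. (c n j)\<^sup>2) \<le> 1" if "j < l" for j
    using bessel_inequality[where r=r and N="e j" and u="\<lambda>n. U n j" and x="x j"] orthonormal unit that
    unfolding c_def by simp
  have c_le_1: "\<bar>c n j\<bar> \<le> 1" if "j < l" "n < r" for j n
  proof -
    have "(c n j)\<^sup>2 \<le> (\<Sum>n<r. (c n j)\<^sup>2)"
      using that by (intro member_le_sum) auto
    also have "\<dots> \<le> 1" using bessel[OF that(1)] .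
    finally show ?thesis by (simp add: abs_square_le_1)
  qed
  have "lam n * (\<Prod>j<l. c n j) \<le> lam 0 * (((c n 0)\<^sup>2 + (c n 1)\<^sup>2) / 2)" if "n < r" for n
  proof -
    have "lam n * (\<Prod>j<l. c n j) \<le> lam n * (((c n 0)\<^sup>2 + (c n 1)\<^sup>2) / 2)"
      using prod_le_half_sum_squares[OF order, of "c n"] lam_nonneg[OF that] that c_le_1
      by (intro mult_left_mono) auto
    also have "\<dots> \<le> lam 0 * (((c n 0)\<^sup>2 + (c n 1)\<^sup>2) / 2)"
      using lam_le_lam0[OF that] by (intro mult_right_mono) auto
    finally show ?thesis .
  qed
  then have "(\<Sum>n<r. lam n * (\<Prod>j<l. c n j)) \<le> (\<Sum>n<r. lam 0 * (((c n 0)\<^sup>2 + (c n 1)\<^sup>2) / 2))"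
    by (intro sum_mono) simp
  also have "\<dots> = lam 0 * ((\<Sum>n<r. (c n 0)\<^sup>2) + (\<Sum>n<r. (c n 1)\<^sup>2)) / 2"
    by (simp add: sum_distrib_left sum.distrib distrib_left flip: sum_divide_distrib)
  also have "\<dots> \<le> lam 0"
    using bessel[of 0] bessel[of 1] order lam_nonneg[OF rank]
    by (simp add: mult_left_mono[where b=2, simplified])
  finally show ?thesis unfolding c_def .
qed

lemma odeco_form_at_first_component:
  "(\<Sum>n<r. lam n * (\<Prod>j<l. \<Sum>t<e j. U n j t * U 0 j t)) = lam 0"
proof -
  have factor: "(\<Prod>j<l. \<Sum>t<e j. U n j t * U 0 j t) = (if n = 0 then 1 else 0)" if "n < r" for n
  proof -
    have "(\<Prod>j<l. \<Sum>t<e j. U n j t * U 0 j t) = (\<Prod>j<l. if n = 0 then 1 else 0)"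
      using orthonormal[of _ n 0] that rank by (intro prod.cong) auto
    then show ?thesis using order by simp
  qed
  have "(\<Sum>n<r. lam n * (\<Prod>j<l. \<Sum>t<e j. U n j t * U 0 j t)) = (\<Sum>n<r. if n = 0 then lam n else 0)"
    by (rule sum.cong) (simp_all add: factor)
  then show ?thesis using rank by simp
qed

lemma spectral_norm_rank_one_sum:
  "spectral_norm l e (rank_one_sum l r lam U) = lam 0"
  unfolding spectral_norm_def multilinear_form_rank_one_sum
proof (rule cSup_eq_maximum)
  have "\<forall>j<l. (\<Sum>t<e j. (U 0 j t)\<^sup>2) = 1"
    using orthonormal[of _ 0 0] rank by (simp add: power2_eq_square)
  then show "lam 0 \<in> {\<Sum>n<r. lam n * (\<Prod>j<l. \<Sum>t<e j. U n j t * x j t) | x.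
      \<forall>j<l. (\<Sum>t<e j. (x j t)\<^sup>2) = 1}"
    using odeco_form_at_first_component by force
qed (auto intro: odeco_form_le)

end

lemma bij_betw_benc:
  assumes "finite B"
  shows "bij_betw (benc d B) (bidx d B) {..<(\<Prod>j\<in>B. d j)}"
proof -
  have "finite (bidx d B)" "card (bidx d B) = (\<Prod>j\<in>B. d j)"
    unfolding bidx_def using assms by (simp_all add: finite_PiE card_PiE)
  then have "\<exists>f. bij_betw f (bidx d B) {..<(\<Prod>j\<in>B. d j)}"
    using ex_bij_betw_finite_nat[of "bidx d B"] by (simp add: atLeast0LessThan)
  then show ?thesis unfolding benc_def by (rule someI_ex)
qed

lemma two_le_card_partition:
  assumes "partition_on S \<pi>" "finite \<pi>" "S \<noteq> {}" "\<pi> \<noteq> {S}"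
  shows "2 \<le> card \<pi>"
proof (rule ccontr)
  assume "\<not> 2 \<le> card \<pi>"
  moreover have "\<pi> \<noteq> {}"
    using partition_onD1[OF assms(1)] assms(3) by auto
  then have "card \<pi> \<noteq> 0" using assms(2) by simp
  ultimately have "card \<pi> = 1" by linarith
  then obtain B where "\<pi> = {B}" by (rule card_1_singletonE)
  then show False using partition_onD1[OF assms(1)] assms(4) by simp
qed

locale block_unfolding =
  fixes k :: nat and d :: "nat \<Rightarrow> nat" and \<pi> :: "nat set set"
  assumes partition: "partition_on {..<k} \<pi>"
begin

abbreviation "bs \<equiv> blocks \<pi>"

lemma finite_partition: "finite \<pi>"
  using finite_elements[OF _ partition] by simp

lemma distinct_blocks: "distinct bs" and set_blocks: "set bs = \<pi>"
proof -
  have "\<exists>xs. distinct xs \<and> set xs = \<pi>"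
    using finite_distinct_list[OF finite_partition] by blast
  then have "distinct bs \<and> set bs = \<pi>"
    unfolding blocks_def by (rule someI_ex)
  then show "distinct bs" "set bs = \<pi>" by simp_all
qed

lemma length_blocks: "length bs = card \<pi>"
  using distinct_card[OF distinct_blocks] set_blocks by simp

lemma block_in_partition: "j < card \<pi> \<Longrightarrow> bs ! j \<in> \<pi>"
  using nth_mem[of j bs] length_blocks set_blocks by simp

lemma block_subset: "j < card \<pi> \<Longrightarrow> bs ! j \<subseteq> {..<k}"
  using block_in_partition partition_onD1[OF partition] by blast

lemma finite_block: "j < card \<pi> \<Longrightarrow> finite (bs ! j)"
  using block_subset finite_subset by blast

lemma block_unique:
  assumes "j < card \<pi>" "j' < card \<pi>" "x \<in> bs ! j" "x \<in> bs ! j'"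
  shows "j = j'"
proof -
  have "bs ! j = bs ! j'"
    using disjointD[OF partition_onD2[OF partition] block_in_partition block_in_partition] assms
    by blast
  then show ?thesis
    using nth_eq_iff_index_eq[OF distinct_blocks] assms(1,2) by (simp add: length_blocks)
qed

definition block_of :: "nat \<Rightarrow> nat" where
  "block_of x = (THE j. j < length bs \<and> x \<in> bs ! j)"

lemma block_of_eq: "j < card \<pi> \<Longrightarrow> x \<in> bs ! j \<Longrightarrow> block_of x = j"
  unfolding block_of_def length_blocks using block_unique by blast

lemma block_of:
  assumes "x < k"
  shows "block_of x < card \<pi>" "x \<in> bs ! block_of x"
proof -
  obtain B where "B \<in> \<pi>" "x \<in> B"
    using partition_onD1[OF partition] assms by blast
  then obtain j where "j < card \<pi>" "x \<in> bs ! j"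
    using set_blocks length_blocks by (metis in_set_conv_nth)
  then show "block_of x < card \<pi>" "x \<in> bs ! block_of x"
    using block_of_eq by simp_all
qed

definition block_decode :: "nat \<Rightarrow> nat \<Rightarrow> nat \<Rightarrow> nat" where
  "block_decode j = inv_into (bidx d (bs ! j)) (benc d (bs ! j))"

lemma bij_betw_block_decode:
  "j < card \<pi> \<Longrightarrow> bij_betw (block_decode j) {..<unfold_dims d \<pi> j} (bidx d (bs ! j))"
  unfolding block_decode_def unfold_dims_def
  by (intro bij_betw_inv_into bij_betw_benc finite_block)

definition merge_index :: "(nat \<Rightarrow> nat) \<Rightarrow> nat \<Rightarrow> nat" where
  "merge_index m = (\<lambda>x. if x < k then block_decode (block_of x) (m (block_of x)) x else undefined)"

lemma Unfold_eq: "Unfold k d \<pi> A m = A (merge_index m)"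
  unfolding Unfold_def merge_index_def block_decode_def block_of_def Let_def ..

lemma merge_index_block: "j < card \<pi> \<Longrightarrow> x \<in> bs ! j \<Longrightarrow> merge_index m x = block_decode j (m j) x"
  using block_of_eq block_subset unfolding merge_index_def by auto

lemma merge_index_in_tidx:
  assumes "m \<in> tidx (card \<pi>) (unfold_dims d \<pi>)"
  shows "merge_index m \<in> tidx k d"
  unfolding tidx_def PiE_iff
proof (intro conjI ballI)
  fix x assume "x \<in> {..<k}"
  then have x: "x < k" by simp
  have "m (block_of x) < unfold_dims d \<pi> (block_of x)"
    using assms block_of(1)[OF x] unfolding tidx_def by auto
  then have "block_decode (block_of x) (m (block_of x)) \<in> bidx d (bs ! block_of x)"
    using bij_betw_block_decode[OF block_of(1)[OF x]] bij_betwE by blast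
  then show "merge_index m x \<in> {..<d x}"
    using x block_of[OF x] unfolding merge_index_def bidx_def by auto
qed (auto simp: merge_index_def extensional_def)

lemma prod_merge_index:
  "(\<Prod>x<k. f x (merge_index m x)) = (\<Prod>j<card \<pi>. tprod f (bs ! j) (block_decode j (m j)))"
proof -
  have "{..<k} = (\<Union>j<card \<pi>. bs ! j)"
    using block_of block_subset by blast
  then have "(\<Prod>x<k. f x (merge_index m x)) = (\<Prod>j<card \<pi>. \<Prod>x\<in>bs ! j. f x (merge_index m x))"
    by (simp only:) (rule prod.UNION_disjoint, use finite_block block_unique in auto)
  also have "\<dots> = (\<Prod>j<card \<pi>. tprod f (bs ! j) (block_decode j (m j)))"
    unfolding tprod_def by (intro prod.cong refl) (simp add: merge_index_block)
  finally show ?thesis .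
qed

end

context block_unfolding
begin

lemma Unfold_piOD_decomp:
  assumes D: "is_piOD_decomp k d \<pi> A r lam a"
    and m: "m \<in> tidx (card \<pi>) (unfold_dims d \<pi>)"
  shows "Unfold k d \<pi> A m
    = rank_one_sum (card \<pi>) r lam (\<lambda>n j t. tprod (a n) (bs ! j) (block_decode j t)) m"
proof -
  have "Unfold k d \<pi> A m = (\<Sum>n<r. lam n * (\<Prod>x<k. a n x (merge_index m x)))"
    using D merge_index_in_tidx[OF m] unfolding Unfold_eq is_piOD_decomp_def by blast
  then show ?thesis unfolding rank_one_sum_def prod_merge_index .
qed

lemma orthonormal_decoded_blocks:
  assumes D: "is_piOD_decomp k d \<pi> A r lam a" and "j < card \<pi>" "n < r" "n' < r"
  shows "(\<Sum>t<unfold_dims d \<pi> j. tprod (a n) (bs ! j) (block_decode j t)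
      * tprod (a n') (bs ! j) (block_decode j t)) = (if n = n' then 1 else 0)"
proof -
  have "(\<Sum>t<unfold_dims d \<pi> j. tprod (a n) (bs ! j) (block_decode j t)
      * tprod (a n') (bs ! j) (block_decode j t))
      = tinner d (bs ! j) (tprod (a n) (bs ! j)) (tprod (a n') (bs ! j))"
    unfolding tinner_def
    by (rule sum.reindex_bij_betw[OF bij_betw_block_decode[OF \<open>j < card \<pi>\<close>]])
  also have "\<dots> = (if n = n' then 1 else 0)"
    using D block_in_partition assms(2-4) unfolding is_piOD_decomp_def by blast
  finally show ?thesis .
qed

lemma spectral_norm_Unfold:
  assumes "1 \<le> k" "\<pi> \<noteq> {{..<k}}" and D: "is_piOD_decomp k d \<pi> A r lam a" and "1 \<le> r"
  shows "spectral_norm (card \<pi>) (unfold_dims d \<pi>) (Unfold k d \<pi> A) = lam 0"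
proof -
  have "{..<k} \<noteq> {}" using \<open>1 \<le> k\<close> by (simp add: lessThan_empty_iff)
  then have "2 \<le> card \<pi>"
    using two_le_card_partition[OF partition finite_partition] \<open>\<pi> \<noteq> {{..<k}}\<close> by blast
  moreover have "\<And>n. n < r \<Longrightarrow> lam n \<le> lam 0" "\<And>n. n < r \<Longrightarrow> 0 \<le> lam n"
    using D unfolding is_piOD_decomp_def by auto
  ultimately show ?thesis
    using Unfold_piOD_decomp[OF D] orthonormal_decoded_blocks[OF D] \<open>1 \<le> r\<close>
    by (subst spectral_norm_cong[where T'="rank_one_sum _ r lam _"])
      (auto intro: spectral_norm_rank_one_sum)
qed

end

theorem lemma5p3:
  fixes k :: nat and d :: "nat \<Rightarrow> nat" and A :: "(nat \<Rightarrow> nat) \<Rightarrow> real"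
  shows "(\<forall>\<pi>1 \<pi>2. partition_on {..<k} \<pi>1 \<longrightarrow> partition_on {..<k} \<pi>2 \<longrightarrow>
            refines \<pi>1 \<pi>2 \<longrightarrow> piOD k d \<pi>1 A \<longrightarrow> piOD k d \<pi>2 A)
       \<and> (\<forall>\<pi> r lam a. 1 \<le> k \<longrightarrow> partition_on {..<k} \<pi> \<longrightarrow> \<pi> \<noteq> {{..<k}} \<longrightarrow>
            is_piOD_decomp k d \<pi> A r lam a \<longrightarrow> 1 \<le> r \<longrightarrow>
            spectral_norm (card \<pi>) (unfold_dims d \<pi>) (Unfold k d \<pi> A) = lam 0)"
  using piOD_refines block_unfolding.spectral_norm_Unfold[OF block_unfolding.intro] by blast

end
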